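(* Let $\mathcal{A}=(Q,\gamma,W)$ be a one-dimensional pVASS. Every configuration of $\mathcal{A}$ can reach a configuration belonging to some region of $\mathcal{A}$ in at most $11|Q|^4$ transitions of $\mathcal{M}_\mathcal{A}$.
   Context: A pVASS of dimension $d\ge1$ is $\mathcal{A}=(Q,\gamma,W)$: $Q$ finite set of control states, $\gamma\subseteq Q\times\{-1,0,1\}^d\times Q$ rules, $W:\gamma\to\mathbb{N}^+$ weights. Standing assumption: the graph on $Q$ with an edge $p\to q$ iff some rule $(p,\kappa,q)$ exists is weakly connected, and for all $p,q$ at most one rule $(p,\kappa,q)$ exists. For $d=1$ configurations are $p(k)\in Q\times\mathbb{N}$. A rule $(p,\kappa,q)$ is enabled in $p(k)$ unless $\kappa=-1$ and $k=0$. The Markov chain $\mathcal{M}_\mathcal{A}$ on configurations: if no rule is enabled in $p(k)$ there is only the self-loop with probability 1; otherwise each enabled rule $(p,\kappa,q)$ of weight $\ell$ gives $p(k)\to q(k+\kappa)$ with probability $\ell/T$, $T$ the total weight of enabled rules. $\mathit{post}^*(X)$/$\mathit{pre}^*(X)$ are the sets of configurations reachable from / able to reach $X$. $\mathscr{C}_\mathcal{A}$ is the finite Markov chain on $Q$ with $p\to q$ with probability $W((p,\kappa,q))/T_p$ ($T_p$ total weight of rules with source $p$); BSCC = bottom strongly connected component. Regions: for $p\in Q$, the type I region determined by $p$ is $\mathit{post}^*(p(0))$ if this set is finite and contained in $\mathit{pre}^*(p(0))$, and $\emptyset$ otherwise. For $p$ in a BSCC $S$ of $\mathscr{C}_\mathcal{A}$,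 the type II region determined by $p$ is $\mathit{post}^*(p(0))$ if this set is infinite and contained in $\mathit{pre}^*(p(0))$, and $\emptyset$ otherwise. For a BSCC $S$, the type III region determined by $S$ is the set of all $p(k)$ with $p\in S$, $k\ge1$, that cannot reach any configuration with zero counter. Let $R_I(S)$, $R_{II}(S)$ be the unions of the type I, resp. type II, regions determined by states of $S$, and $D(S)=\big((S\times\mathbb{N})\cap\mathit{pre}^*(R_I(S))\big)\setminus\big(R_I(S)\cup\mathit{pre}^*(R_{II}(S))\big)$; the type IV region determined by $S$ is $D(S)$ if $D(S)$ is infinite and $\emptyset$ otherwise. A region of $\mathcal{A}$ is any of these sets. *)

theory Defs
  imports Complex_Main
begin

(* One-dimensional pVASS: control states Q, rules gamma (p, kappa, q) with kappa in {-1,0,1},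
   weights W.  Configurations p(k) are pairs (p, k) :: 'q * nat. *)

type_synonym 'q rule = "'q \<times> int \<times> 'q"
type_synonym 'q conf = "'q \<times> nat"

definition rule_graph :: "'q rule set \<Rightarrow> ('q \<times> 'q) set" where
  "rule_graph \<gamma> = {(p, q). \<exists>\<kappa>. (p, \<kappa>, q) \<in> \<gamma>}"

definition pVASS1 :: "'q set \<Rightarrow> 'q rule set \<Rightarrow> ('q rule \<Rightarrow> nat) \<Rightarrow> bool" where
  "pVASS1 Q \<gamma> W \<longleftrightarrow>
     finite Q \<and>
     \<gamma> \<subseteq> Q \<times> {-1, 0, 1} \<times> Q \<and>
     (\<forall>r\<in>\<gamma>. W r > 0) \<and>
     (\<forall>p\<in>Q. \<forall>q\<in>Q. (p, q) \<in> (rule_graph \<gamma> \<union> (rule_graph \<gamma>)\<inverse>)\<^sup>*) \<and>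
     (\<forall>p \<kappa> \<kappa>' q. (p, \<kappa>, q) \<in> \<gamma> \<longrightarrow> (p, \<kappa>', q) \<in> \<gamma> \<longrightarrow> \<kappa> = \<kappa>')"

definition enabled :: "'q rule \<Rightarrow> 'q conf \<Rightarrow> bool" where
  "enabled r c \<longleftrightarrow> (case r of (p', \<kappa>, q) \<Rightarrow> fst c = p' \<and> \<not> (\<kappa> = -1 \<and> snd c = 0))"

definition apply_rule :: "'q rule \<Rightarrow> 'q conf \<Rightarrow> 'q conf" where
  "apply_rule r c = (case r of (p', \<kappa>, q) \<Rightarrow> (q, nat (int (snd c) + \<kappa>)))"

definition enabled_rules :: "'q rule set \<Rightarrow> 'q conf \<Rightarrow> 'q rule set" where
  "enabled_rules \<gamma> c = {r \<in> \<gamma>. enabled r c}"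

definition MA_prob :: "'q rule set \<Rightarrow> ('q rule \<Rightarrow> nat) \<Rightarrow> 'q conf \<Rightarrow> 'q conf \<Rightarrow> real" where
  "MA_prob \<gamma> W c c' =
     (if enabled_rules \<gamma> c = {} then (if c' = c then 1 else 0)
      else (\<Sum>r\<in>{r \<in> enabled_rules \<gamma> c. apply_rule r c = c'}. real (W r))
           / (\<Sum>r\<in>enabled_rules \<gamma> c. real (W r)))"

definition MA_step :: "'q rule set \<Rightarrow> ('q rule \<Rightarrow> nat) \<Rightarrow> 'q conf \<Rightarrow> 'q conf \<Rightarrow> bool" where
  "MA_step \<gamma> W c c' \<longleftrightarrow> MA_prob \<gamma> W c c' > 0"

definition post_star :: "'q rule set \<Rightarrow> ('q rule \<Rightarrow> nat) \<Rightarrow> 'q conf set \<Rightarrow> 'q conf set" where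
  "post_star \<gamma> W X = {c'. \<exists>c\<in>X. (MA_step \<gamma> W)\<^sup>*\<^sup>* c c'}"

definition pre_star :: "'q rule set \<Rightarrow> ('q rule \<Rightarrow> nat) \<Rightarrow> 'q conf set \<Rightarrow> 'q conf set" where
  "pre_star \<gamma> W X = {c. \<exists>c'\<in>X. (MA_step \<gamma> W)\<^sup>*\<^sup>* c c'}"

definition CA_prob :: "'q set \<Rightarrow> 'q rule set \<Rightarrow> ('q rule \<Rightarrow> nat) \<Rightarrow> 'q \<Rightarrow> 'q \<Rightarrow> real" where
  "CA_prob Q \<gamma> W p q =
     (let out = {r \<in> \<gamma>. fst r = p} in
      if out = {} then (if q = p then 1 else 0)
      else (\<Sum>r\<in>{r \<in> out. snd (snd r) = q}. real (W r)) / (\<Sum>r\<in>out. real (W r)))"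

definition CA_edge :: "'q set \<Rightarrow> 'q rule set \<Rightarrow> ('q rule \<Rightarrow> nat) \<Rightarrow> ('q \<times> 'q) set" where
  "CA_edge Q \<gamma> W = {(p, q). p \<in> Q \<and> q \<in> Q \<and> CA_prob Q \<gamma> W p q > 0}"

definition BSCC :: "'q set \<Rightarrow> 'q rule set \<Rightarrow> ('q rule \<Rightarrow> nat) \<Rightarrow> 'q set \<Rightarrow> bool" where
  "BSCC Q \<gamma> W S \<longleftrightarrow> S \<noteq> {} \<and> S \<subseteq> Q \<and>
     (\<forall>p\<in>S. \<forall>q\<in>S. (p, q) \<in> (CA_edge Q \<gamma> W)\<^sup>*) \<and>
     (\<forall>p\<in>S. \<forall>q. (p, q) \<in> CA_edge Q \<gamma> W \<longrightarrow> q \<in> S)"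

definition region_I :: "'q rule set \<Rightarrow> ('q rule \<Rightarrow> nat) \<Rightarrow> 'q \<Rightarrow> 'q conf set" where
  "region_I \<gamma> W p =
     (if finite (post_star \<gamma> W {(p, 0)}) \<and> post_star \<gamma> W {(p, 0)} \<subseteq> pre_star \<gamma> W {(p, 0)}
      then post_star \<gamma> W {(p, 0)} else {})"

definition region_II :: "'q rule set \<Rightarrow> ('q rule \<Rightarrow> nat) \<Rightarrow> 'q \<Rightarrow> 'q conf set" where
  "region_II \<gamma> W p =
     (if infinite (post_star \<gamma> W {(p, 0)}) \<and> post_star \<gamma> W {(p, 0)} \<subseteq> pre_star \<gamma> W {(p, 0)}
      then post_star \<gamma> W {(p, 0)} else {})"

definition region_III :: "'q rule set \<Rightarrow> ('q rule \<Rightarrow> nat) \<Rightarrow> 'q set \<Rightarrow> 'q conf set" where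
  "region_III \<gamma> W S =
     {(p, k). p \<in> S \<and> k \<ge> 1 \<and> \<not> (\<exists>q. (MA_step \<gamma> W)\<^sup>*\<^sup>* (p, k) (q, 0))}"

definition R_I :: "'q rule set \<Rightarrow> ('q rule \<Rightarrow> nat) \<Rightarrow> 'q set \<Rightarrow> 'q conf set" where
  "R_I \<gamma> W S = (\<Union>p\<in>S. region_I \<gamma> W p)"

definition R_II :: "'q rule set \<Rightarrow> ('q rule \<Rightarrow> nat) \<Rightarrow> 'q set \<Rightarrow> 'q conf set" where
  "R_II \<gamma> W S = (\<Union>p\<in>S. region_II \<gamma> W p)"

definition D_set :: "'q rule set \<Rightarrow> ('q rule \<Rightarrow> nat) \<Rightarrow> 'q set \<Rightarrow> 'q conf set" where
  "D_set \<gamma> W S =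
     ((S \<times> UNIV) \<inter> pre_star \<gamma> W (R_I \<gamma> W S)) - (R_I \<gamma> W S \<union> pre_star \<gamma> W (R_II \<gamma> W S))"

definition region_IV :: "'q rule set \<Rightarrow> ('q rule \<Rightarrow> nat) \<Rightarrow> 'q set \<Rightarrow> 'q conf set" where
  "region_IV \<gamma> W S = (if infinite (D_set \<gamma> W S) then D_set \<gamma> W S else {})"

definition is_region :: "'q set \<Rightarrow> 'q rule set \<Rightarrow> ('q rule \<Rightarrow> nat) \<Rightarrow> 'q conf set \<Rightarrow> bool" where
  "is_region Q \<gamma> W R \<longleftrightarrow>
     (\<exists>p\<in>Q. R = region_I \<gamma> W p) \<or>
     (\<exists>S p. BSCC Q \<gamma> W S \<and> p \<in> S \<and> R = region_II \<gamma> W p) \<or>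
     (\<exists>S. BSCC Q \<gamma> W S \<and> R = region_III \<gamma> W S) \<or>
     (\<exists>S. BSCC Q \<gamma> W S \<and> R = region_IV \<gamma> W S)"

end

theory Submission
  imports Defs
begin

text \<open>Let \<open>n = card Q\<close>. From a counter of at least \<open>n\<^sup>2 + 2n\<close>, fewer than \<open>n\<close> steps along
  \<open>C_A\<close> lead into a BSCC \<open>S\<close> with the counter still at least \<open>n\<^sup>2 + n\<close>. If that configuration
  cannot reach counter zero, it lies in the type III region. Otherwise, following a path to zero
  through \<open>n + 1\<close> consecutive levels repeats a control state; the resulting cycle lowers the
  counter while keeping it positive, so every configuration over \<open>S\<close> can reach zero. A type II
  region over \<open>S\<close> contains a pumpable cycle of length \<open>h \<le> n\<close>, so whether \<open>R_II(S)\<close> can be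
  reached depends only on the counter modulo \<open>n!\<close>; if it can, a short path in the finite
  abstraction \<open>Q \<times> \<int>/h\<close> reaches it within \<open>n\<^sup>2\<close> steps. If it cannot, all configurations
  \<open>(q, j + t n!)\<close> lie in \<open>D(S)\<close>, which is thus infinite, a type IV region.
  From a smaller counter, some region is reached (qualitatively) either while the counter stays below
  \<open>H = n\<^sup>2 + 2n\<close>, and then within \<open>n (H + 1)\<close> steps, or after first reaching counter \<open>H\<close>.
  Finally \<open>n (H + 1) + n\<^sup>2 + n \<le> 11 n\<^sup>4\<close>.\<close>

lemma relpowp_path_segment:
  assumes "\<forall>i<m. r (f i) (f (Suc i))" and "a \<le> b" and "b \<le> m"
  shows "(r ^^ (b - a)) (f a) (f b)"
  unfolding relpowp_fun_conv
  by (rule exI[of _ "\<lambda>i. f (a + i)"]) (use assms in auto)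

text \<open>A shortest path visits pairwise distinct points of the reachable set.\<close>

lemma rtranclp_imp_relpowp_less_card:
  assumes "r\<^sup>*\<^sup>* x y" and "finite X" and "\<And>z. r\<^sup>*\<^sup>* x z \<Longrightarrow> z \<in> X"
  shows "\<exists>m < card X. (r ^^ m) x y"
proof -
  define k where "k = (LEAST k. (r ^^ k) x y)"
  have "\<exists>k. (r ^^ k) x y" using assms(1) by (simp add: rtranclp_power)
  then have "(r ^^ k) x y" unfolding k_def by (rule LeastI_ex)
  then obtain f where f: "f 0 = x" "f k = y" "\<forall>i<k. r (f i) (f (Suc i))"
    by (auto simp: relpowp_fun_conv)
  have "inj_on f {0..k}"
  proof (rule linorder_inj_onI')
    fix a b assume ab: "a \<in> {0..k}" "b \<in> {0..k}" "a < b"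
    show "f a \<noteq> f b"
    proof
      assume "f a = f b"
      moreover have "(r ^^ a) x (f a)"
        using relpowp_path_segment[of k r f 0 a] f ab by auto
      moreover have "(r ^^ (k - b)) (f b) y"
        using relpowp_path_segment[of k r f b k] f ab by auto
      ultimately have "(r ^^ (a + (k - b))) x y" by (simp add: relpowp_trans)
      then have "k \<le> a + (k - b)" unfolding k_def by (rule Least_le)
      then show False using ab by auto
    qed
  qed
  moreover have "f ` {0..k} \<subseteq> X"
  proof clarify
    fix i assume "i \<in> {0..k}"
    then have "(r ^^ i) x (f i)" using relpowp_path_segment[of k r f 0 i] f by auto
    then show "f i \<in> X" using assms(3) relpowp_imp_rtranclp by fastforce
  qed
  ultimately have "card {0..k} \<le> card X" using assms(2) by (rule card_inj_on_le)
  then show ?thesis using \<open>(r ^^ k) x y\<close> by (auto simp: Suc_le_eq)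
qed

lemma region_bound_arith:
  fixes n :: nat
  assumes "1 \<le> n"
  shows "n * (n * n + 2 * n + 1) + (n * n + n) \<le> 11 * n ^ 4"
proof -
  have "n \<le> n * n" "n * n \<le> n * n * n" "n * n * n \<le> n * n * n * n"
    using mult_le_mono2[OF assms] by (metis mult.right_neutral)+
  moreover have "n * (n * n + 2 * n + 1) + (n * n + n) = n * n * n + 3 * (n * n) + 2 * n"
    by (simp add: algebra_simps)
  ultimately show ?thesis unfolding power4_eq_xxxx by linarith
qed

locale pVASS1_system =
  fixes Q :: "'q set" and \<gamma> :: "'q rule set" and W :: "'q rule \<Rightarrow> nat"
  assumes pVASS1: "pVASS1 Q \<gamma> W"
begin

abbreviation tr :: "'q conf \<Rightarrow> 'q conf \<Rightarrow> bool" where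
  "tr \<equiv> MA_step \<gamma> W"

abbreviation reach :: "'q conf \<Rightarrow> 'q conf \<Rightarrow> bool" where
  "reach \<equiv> tr\<^sup>*\<^sup>*"

definition reaches_zero :: "'q conf \<Rightarrow> bool" where
  "reaches_zero c \<longleftrightarrow> (\<exists>q. reach c (q, 0))"

definition recurrent :: "'q conf \<Rightarrow> bool" where
  "recurrent c \<longleftrightarrow> (\<forall>d. reach c d \<longrightarrow> reach d c)"

definition in_region :: "'q conf \<Rightarrow> bool" where
  "in_region c \<longleftrightarrow> (\<exists>R. is_region Q \<gamma> W R \<and> c \<in> R)"

lemma finite_Q: "finite Q"
  using pVASS1 unfolding pVASS1_def by auto

lemma rule_wf: "(p, \<kappa>, q) \<in> \<gamma> \<Longrightarrow> p \<in> Q \<and> q \<in> Q \<and> \<kappa> \<in> {-1, 0, 1}"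
  using pVASS1 unfolding pVASS1_def by auto

lemma finite_rules: "finite \<gamma>"
proof -
  have "\<gamma> \<subseteq> Q \<times> {-1, 0, 1} \<times> Q" using pVASS1 unfolding pVASS1_def by auto
  then show ?thesis using finite_Q by (auto intro: finite_subset)
qed

lemma weight_sum_pos_iff: "A \<subseteq> \<gamma> \<Longrightarrow> (\<Sum>r\<in>A. real (W r)) > 0 \<longleftrightarrow> A \<noteq> {}"
proof
  assume A: "A \<subseteq> \<gamma>" and "A \<noteq> {}"
  moreover have "finite A" using A finite_rules by (rule finite_subset)
  moreover have "r \<in> A \<Longrightarrow> real (W r) > 0" for r using A pVASS1 unfolding pVASS1_def by auto
  ultimately show "(\<Sum>r\<in>A. real (W r)) > 0" by (intro sum_pos)
qed auto

lemma tr_iff: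
  "tr c c' \<longleftrightarrow> (enabled_rules \<gamma> c = {} \<and> c' = c) \<or> (\<exists>r\<in>enabled_rules \<gamma> c. apply_rule r c = c')"
proof -
  have "enabled_rules \<gamma> c \<subseteq> \<gamma>" "{r \<in> enabled_rules \<gamma> c. apply_rule r c = c'} \<subseteq> \<gamma>"
    unfolding enabled_rules_def by auto
  from this[THEN weight_sum_pos_iff] show ?thesis
    unfolding MA_step_def MA_prob_def by (auto simp: zero_less_divide_iff)
qed

lemma tr_by_rule:
  "(p, \<kappa>, q) \<in> \<gamma> \<Longrightarrow> \<not> (\<kappa> = -1 \<and> k = 0) \<Longrightarrow> tr (p, k) (q, nat (int k + \<kappa>))"
  unfolding tr_iff enabled_rules_def enabled_def apply_rule_def by force

lemma tr_stuck: "\<forall>\<kappa> q. (p, \<kappa>, q) \<in> \<gamma> \<longrightarrow> \<kappa> = -1 \<and> k = 0 \<Longrightarrow> tr (p, k) (p, k)"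
  unfolding tr_iff enabled_rules_def enabled_def by auto

lemma tr_cases[consumes 1, case_names stuck fire]:
  assumes "tr (p, k) (p', k')"
  obtains "p' = p" "k' = k" "\<forall>\<kappa> q. (p, \<kappa>, q) \<in> \<gamma> \<longrightarrow> \<kappa> = -1 \<and> k = 0"
    | \<kappa> where "(p, \<kappa>, p') \<in> \<gamma>" "\<not> (\<kappa> = -1 \<and> k = 0)" "int k' = int k + \<kappa>"
  using assms[unfolded tr_iff]
proof (elim disjE conjE bexE)
  assume "enabled_rules \<gamma> (p, k) = {}" "(p', k') = (p, k)"
  then show thesis using that(1) unfolding enabled_rules_def enabled_def by auto
next
  fix r assume "r \<in> enabled_rules \<gamma> (p, k)" "apply_rule r (p, k) = (p', k')"
  then obtain \<kappa> where "(p, \<kappa>, p') \<in> \<gamma>" "\<not> (\<kappa> = -1 \<and> k = 0)" "k' = nat (int k + \<kappa>)"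
    unfolding enabled_rules_def enabled_def apply_rule_def by auto
  moreover from this(1) have "\<kappa> \<in> {-1, 0, 1}" using rule_wf by blast
  ultimately show thesis using that(2) by auto
qed

lemma tr_counter_diff:
  assumes "tr (p, k) (p', k')"
  shows "k' \<le> Suc k \<and> k \<le> Suc k'"
  using assms
proof (cases rule: tr_cases)
  case (fire \<kappa>)
  then show ?thesis using rule_wf[OF fire(1)] by auto
qed simp

lemma tr_in_Q:
  assumes "tr (p, k) (p', k')" and "p \<in> Q"
  shows "p' \<in> Q"
  using assms(1)
proof (cases rule: tr_cases)
  case (fire \<kappa>)
  then show ?thesis using rule_wf[OF fire(1)] by auto
qed (use assms(2) in simp)

lemma reach_in_Q: "reach c c' \<Longrightarrow> fst c \<in> Q \<Longrightarrow> fst c' \<in> Q"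
proof (induction rule: rtranclp_induct)
  case (step y z)
  then show ?case using tr_in_Q[of "fst y" "snd y" "fst z" "snd z"] by simp
qed

lemma reaches_zero_zero: "reaches_zero (q, 0)"
  unfolding reaches_zero_def by auto

lemma reaches_zero_reach: "reach c d \<Longrightarrow> reaches_zero d \<Longrightarrow> reaches_zero c"
  unfolding reaches_zero_def by (meson rtranclp_trans)

lemma tr_shift:
  assumes "tr (p, k) (p', k')"
  shows "reach (p, k + t) (p', k' + t)"
  using assms
proof (cases rule: tr_cases)
  case (fire \<kappa>)
  then have "tr (p, k + t) (p', nat (int (k + t) + \<kappa>))" by (intro tr_by_rule) auto
  moreover have "int (k + t) + \<kappa> = int (k' + t)" using fire(3) by simp
  ultimately show ?thesis by (metis nat_int r_into_rtranclp)
qed simp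

lemma reach_shift: "reach c d \<Longrightarrow> reach (fst c, snd c + t) (fst d, snd d + t)"
proof (induction rule: rtranclp_induct)
  case (step y z)
  then show ?case using tr_shift[of "fst y" "snd y" "fst z" "snd z" t] by (auto intro: rtranclp_trans)
qed simp

lemma reach_passes_level:
  "reach c d \<Longrightarrow> snd c \<le> l \<Longrightarrow> l \<le> snd d \<Longrightarrow> \<exists>x. reach c x \<and> reach x d \<and> snd x = l"
proof (induction rule: rtranclp_induct)
  case (step y z)
  show ?case
  proof (cases "l \<le> snd y")
    case True
    then show ?thesis using step by (meson rtranclp.rtrancl_into_rtrancl)
  next
    case False
    then have "l = snd z" using tr_counter_diff[of "fst y" "snd y" "fst z" "snd z"] step(2,5) by auto
    then show ?thesis using step(1,2) by (intro exI[of _ z]) auto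
  qed
qed (intro exI[of _ c], auto)

definition tr_above :: "nat \<Rightarrow> 'q conf \<Rightarrow> 'q conf \<Rightarrow> bool" where
  "tr_above l c c' \<longleftrightarrow> tr c c' \<and> l < snd c"

lemma tr_above_mono: "l' \<le> l \<Longrightarrow> (tr_above l)\<^sup>*\<^sup>* c d \<Longrightarrow> (tr_above l')\<^sup>*\<^sup>* c d"
  by (erule rtranclp_mono[THEN predicate2D, rotated]) (auto simp: tr_above_def)

lemma tr_above_imp_reach: "(tr_above l)\<^sup>*\<^sup>* c d \<Longrightarrow> reach c d"
  by (erule rtranclp_mono[THEN predicate2D, rotated]) (auto simp: tr_above_def)

lemma reach_descends_to_level:
  "reach c d \<Longrightarrow> snd d \<le> l \<Longrightarrow> l \<le> snd c \<Longrightarrow> \<exists>x. (tr_above l)\<^sup>*\<^sup>* c x \<and> reach x d \<and> snd x = l"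
proof (induction rule: converse_rtranclp_induct)
  case (step y z)
  show ?case
  proof (cases "snd y = l")
    case True
    then show ?thesis using step(1,2) by (intro exI[of _ y]) auto
  next
    case False
    then have "tr_above l y z" "l \<le> snd z"
      using step(1,5) tr_counter_diff[of "fst y" "snd y" "fst z" "snd z"] unfolding tr_above_def by auto
    then show ?thesis using step(3,4) by (meson converse_rtranclp_into_rtranclp)
  qed
qed (intro exI[of _ d], auto)

subsection \<open>Negative cycles\<close>

lemma tr_replay:
  assumes "tr (u, a) (w, a')" and "1 \<le> a" and "1 \<le> x"
  shows "a \<le> x + a' \<and> tr (u, x) (w, x + a' - a)"
  using assms(1)
proof (cases rule: tr_cases)
  case stuck
  then show ?thesis using assms(2) by (auto intro: tr_stuck)
next
  case (fire \<kappa>)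
  then have "tr (u, x) (w, nat (int x + \<kappa>))" using assms(3) by (intro tr_by_rule) auto
  moreover have "\<kappa> \<in> {-1, 0, 1}" using rule_wf fire(1) by blast
  then have "a \<le> x + a'" "nat (int x + \<kappa>) = x + a' - a" using fire(3) assms(3) by auto
  ultimately show ?thesis by simp
qed

lemma tr_above_0_replay:
  assumes "(tr_above 0)\<^sup>*\<^sup>* c d"
  shows "reaches_zero (fst c, x) \<or> (snd c \<le> x + snd d \<and> reach (fst c, x) (fst d, x + snd d - snd c))"
  using assms
proof (induction arbitrary: x rule: converse_rtranclp_induct)
  case (step y z)
  show ?case
  proof (cases "x = 0")
    case True
    then show ?thesis using reaches_zero_zero by simp
  next
    case False
    define x' where "x' = x + snd z - snd y"
    have "tr (fst y, snd y) (fst z, snd z)" "1 \<le> snd y" using step(1) unfolding tr_above_def by auto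
    then have y: "snd y \<le> x + snd z" "tr (fst y, x) (fst z, x')"
      using tr_replay[of "fst y" "snd y" "fst z" "snd z" x] False unfolding x'_def by auto
    from step(3)[of x'] show ?thesis
    proof
      assume "reaches_zero (fst z, x')"
      then show ?thesis using y(2) reaches_zero_reach by blast
    next
      assume "snd z \<le> x' + snd d \<and> reach (fst z, x') (fst d, x' + snd d - snd z)"
      moreover have "x' + snd d - snd z = x + snd d - snd y" using y(1) unfolding x'_def by auto
      ultimately show ?thesis using y unfolding x'_def by (auto intro: converse_rtranclp_into_rtranclp)
    qed
  qed
qed auto

lemma negative_cycle_reaches_zero:
  assumes "(tr_above 0)\<^sup>*\<^sup>* (u, a) (u, b)" and "b < a"
  shows "reaches_zero (u, x)"
proof (induction x rule: less_induct)
  case (less x)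
  from tr_above_0_replay[OF assms(1), of x]
  have "reaches_zero (u, x) \<or> (a \<le> x + b \<and> reach (u, x) (u, x + b - a))" by simp
  then show ?case
  proof
    assume "reaches_zero (u, x)"
    then show ?thesis .
  next
    assume h: "a \<le> x + b \<and> reach (u, x) (u, x + b - a)"
    then have "x + b - a < x" using assms(2) by auto
    then have "reaches_zero (u, x + b - a)" by (rule less)
    then show ?thesis using h reaches_zero_reach by blast
  qed
qed

lemma descent_chain:
  assumes "reach c d" and "snd d = 0"
  shows "i \<le> snd c \<Longrightarrow> \<exists>f. f 0 = c \<and> (\<forall>t\<le>i. snd (f t) = snd c - t \<and> reach (f t) d) \<and>
           (\<forall>t t'. t \<le> t' \<longrightarrow> t' \<le> i \<longrightarrow> (tr_above 0)\<^sup>*\<^sup>* (f t) (f t'))"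
proof (induction i)
  case 0
  then show ?case using assms by (intro exI[of _ "\<lambda>_. c"]) auto
next
  case (Suc i)
  then obtain f where f: "f 0 = c" "\<forall>t\<le>i. snd (f t) = snd c - t \<and> reach (f t) d"
    "\<forall>t t'. t \<le> t' \<longrightarrow> t' \<le> i \<longrightarrow> (tr_above 0)\<^sup>*\<^sup>* (f t) (f t')"
    by auto
  have "\<exists>x. (tr_above (snd c - Suc i))\<^sup>*\<^sup>* (f i) x \<and> reach x d \<and> snd x = snd c - Suc i"
    by (rule reach_descends_to_level) (use f(2) assms(2) Suc.prems in auto)
  then obtain x where x: "(tr_above (snd c - Suc i))\<^sup>*\<^sup>* (f i) x" "reach x d" "snd x = snd c - Suc i"
    by blast
  have "(tr_above 0)\<^sup>*\<^sup>* (f t) x" if "t \<le> i" for t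
    using f(3) that tr_above_mono[OF _ x(1)] by (meson le0 le_refl rtranclp_trans)
  then show ?case using f x
    by (intro exI[of _ "f(Suc i := x)"]) (auto simp: le_Suc_eq)
qed

text \<open>The first visits of the levels \<open>j, j - 1, \<dots>, j - card Q\<close> on a path to zero repeat a
  control state.\<close>

lemma high_reaches_zero_imp_negative_cycle:
  assumes "q \<in> Q" and "card Q \<le> j" and "reaches_zero (q, j)"
  obtains u a where "reach (q, j) (u, a)" and "\<And>x. reaches_zero (u, x)"
proof -
  obtain d where d: "reach (q, j) d" "snd d = 0" using assms(3) unfolding reaches_zero_def by auto
  obtain f where f: "f 0 = (q, j)" "\<forall>t\<le>card Q. snd (f t) = j - t"
    "\<forall>t t'. t \<le> t' \<longrightarrow> t' \<le> card Q \<longrightarrow> (tr_above 0)\<^sup>*\<^sup>* (f t) (f t')"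
    using descent_chain[OF d, of "card Q"] assms(2) by auto
  have reach_f: "reach (q, j) (f t)" if "t \<le> card Q" for t
    using f(1,3) that tr_above_imp_reach by (metis le0)
  have "fst (f t) \<in> Q" if "t \<le> card Q" for t
    using reach_in_Q[OF reach_f[OF that]] assms(1) by simp
  then have "(fst \<circ> f) ` {0..card Q} \<subseteq> Q" by auto
  then have "\<not> inj_on (fst \<circ> f) {0..card Q}"
    using card_inj_on_le[OF _ _ finite_Q] by fastforce
  then obtain t t' where tt: "t < t'" "t' \<le> card Q" "fst (f t) = fst (f t')"
    unfolding inj_on_def by (metis atLeastAtMost_iff comp_apply linorder_neqE_nat)
  define u where "u = fst (f t)"
  have "f t = (u, j - t)" "f t' = (u, j - t')"
    using f(2) tt unfolding u_def by (metis less_imp_le order.trans prod.collapse)+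
  then have "(tr_above 0)\<^sup>*\<^sup>* (u, j - t) (u, j - t')"
    using f(3) tt by (metis less_imp_le)
  moreover have "j - t' < j - t" using tt assms(2) by auto
  ultimately have "reaches_zero (u, x)" for x by (rule negative_cycle_reaches_zero)
  moreover have "reach (q, j) (u, j - t)"
    using reach_f tt \<open>f t = (u, j - t)\<close> by (metis less_imp_le order.trans)
  ultimately show thesis using that by blast
qed

subsection \<open>Bottom strongly connected components\<close>

abbreviation E :: "('q \<times> 'q) set" where
  "E \<equiv> CA_edge Q \<gamma> W"

lemma CA_edge_iff:
  "(p, q) \<in> E \<longleftrightarrow> p \<in> Q \<and> q \<in> Q \<and> ((\<exists>\<kappa>. (p, \<kappa>, q) \<in> \<gamma>) \<or> (q = p \<and> (\<forall>\<kappa> q'. (p, \<kappa>, q') \<notin> \<gamma>)))"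
proof -
  define out where "out = {r \<in> \<gamma>. fst r = p}"
  have prob: "CA_prob Q \<gamma> W p q = (if out = {} then (if q = p then 1 else 0)
      else (\<Sum>r\<in>{r \<in> out. snd (snd r) = q}. real (W r)) / (\<Sum>r\<in>out. real (W r)))"
    unfolding CA_prob_def Let_def out_def ..
  have "out \<subseteq> \<gamma>" "{r \<in> out. snd (snd r) = q} \<subseteq> \<gamma>" unfolding out_def by auto
  from this[THEN weight_sum_pos_iff]
  have "CA_prob Q \<gamma> W p q > 0 \<longleftrightarrow> (if out = {} then q = p else {r \<in> out. snd (snd r) = q} \<noteq> {})"
    unfolding prob by (auto simp: zero_less_divide_iff)
  moreover have "out = {} \<longleftrightarrow> (\<forall>\<kappa> q'. (p, \<kappa>, q') \<notin> \<gamma>)"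
    "{r \<in> out. snd (snd r) = q} \<noteq> {} \<longleftrightarrow> (\<exists>\<kappa>. (p, \<kappa>, q) \<in> \<gamma>)"
    unfolding out_def by force+
  ultimately show ?thesis unfolding CA_edge_def by auto
qed

lemma tr_imp_CA_edge:
  assumes "tr (p, k) (p', k')" and "p \<in> Q"
  shows "p' = p \<or> (p, p') \<in> E"
  using assms(1)
proof (cases rule: tr_cases)
  case (fire \<kappa>)
  then show ?thesis using rule_wf[OF fire(1)] CA_edge_iff by blast
qed simp

lemma reach_in_BSCC:
  assumes "BSCC Q \<gamma> W S"
  shows "reach c d \<Longrightarrow> fst c \<in> S \<Longrightarrow> fst d \<in> S"
proof (induction rule: rtranclp_induct)
  case (step y z)
  moreover have "fst y \<in> Q" using step assms unfolding BSCC_def by auto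
  ultimately show ?case using tr_imp_CA_edge[of "fst y" "snd y" "fst z" "snd z"] assms
    unfolding BSCC_def by auto
qed

lemma CA_rtrancl_imp_reach:
  "(p, q) \<in> E\<^sup>* \<Longrightarrow> reaches_zero (p, k) \<or> (\<exists>k'. reach (p, k) (q, k'))"
proof (induction arbitrary: k rule: converse_rtrancl_induct)
  case (step y z)
  from step(1)[unfolded CA_edge_iff] show ?case
  proof (elim conjE disjE exE)
    fix \<kappa> assume r: "(y, \<kappa>, z) \<in> \<gamma>"
    show ?thesis
    proof (cases "\<kappa> = -1 \<and> k = 0")
      case True
      then show ?thesis using reaches_zero_zero by auto
    next
      case False
      then have "tr (y, k) (z, nat (int k + \<kappa>))" using tr_by_rule[OF r] by auto
      then show ?thesis using step(3)[of "nat (int k + \<kappa>)"] reaches_zero_reach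
        by (meson converse_rtranclp_into_rtranclp r_into_rtranclp)
    qed
  next
    assume "z = y"
    then show ?thesis using step(3)[of k] by auto
  qed
qed auto

lemma CA_relpowp_lift:
  "((\<lambda>a b. (a, b) \<in> E) ^^ m) p q \<Longrightarrow> m \<le> k \<Longrightarrow> \<exists>k'. (tr ^^ m) (p, k) (q, k') \<and> k \<le> k' + m"
proof (induction m arbitrary: p k)
  case (Suc m)
  obtain y where y: "(p, y) \<in> E" "((\<lambda>a b. (a, b) \<in> E) ^^ m) y q"
    using relpowp_Suc_D2[OF Suc(2)] by auto
  obtain k1 where k1: "tr (p, k) (y, k1)" "k \<le> Suc k1"
  proof -
    from y(1)[unfolded CA_edge_iff] show thesis
    proof (elim conjE disjE exE)
      fix \<kappa> assume r: "(p, \<kappa>, y) \<in> \<gamma>"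
      then have "tr (p, k) (y, nat (int k + \<kappa>))" using tr_by_rule Suc(3) by auto
      moreover have "\<kappa> \<in> {-1, 0, 1}" using rule_wf r by blast
      ultimately show thesis using that by force
    next
      assume "y = p" "\<forall>\<kappa> q'. (p, \<kappa>, q') \<notin> \<gamma>"
      then show thesis using that[of k] tr_stuck by auto
    qed
  qed
  have "m \<le> k1" using Suc(3) k1(2) by simp
  then obtain k' where k': "(tr ^^ m) (y, k1) (q, k')" "k1 \<le> k' + m"
    using Suc(1)[OF y(2)] by blast
  have "(tr ^^ Suc m) (p, k) (q, k')" using k1(1) k'(1) by (rule relpowp_Suc_I2)
  moreover have "k \<le> k' + Suc m" using k1(2) k'(2) by simp
  ultimately show ?case by blast
qed simp

lemma CA_rtrancl_in_Q: "(p, q) \<in> E\<^sup>* \<Longrightarrow> p \<in> Q \<Longrightarrow> q \<in> Q"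
  by (induction rule: rtrancl_induct) (auto simp: CA_edge_iff)

lemma BSCC_reachable: "p \<in> Q \<Longrightarrow> \<exists>S q. BSCC Q \<gamma> W S \<and> q \<in> S \<and> (p, q) \<in> E\<^sup>*"
proof -
  assume p: "p \<in> Q"
  define R where "R x = {y. (x, y) \<in> E\<^sup>*}" for x
  have R_Q: "x \<in> Q \<Longrightarrow> R x \<subseteq> Q" for x
    using CA_rtrancl_in_Q unfolding R_def by auto
  obtain q where q: "q \<in> R p" "\<And>y. y \<in> R p \<Longrightarrow> card (R q) \<le> card (R y)"
    using ex_has_least_nat[of "\<lambda>x. x \<in> R p" p "\<lambda>x. card (R x)"] unfolding R_def by auto
  have "finite (R q)" using R_Q q(1) R_Q[OF p] finite_Q by (meson finite_subset subsetD)
  have returns: "q \<in> R y" if "y \<in> R q" for y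
  proof -
    have "R y \<subseteq> R q" "y \<in> R p" using that q(1) unfolding R_def by auto
    then have "R y = R q" using q(2) \<open>finite (R q)\<close> by (meson card_seteq)
    then show ?thesis unfolding R_def by auto
  qed
  have "BSCC Q \<gamma> W (R q)"
    unfolding BSCC_def
  proof (intro conjI ballI allI impI)
    show "R q \<noteq> {}" "R q \<subseteq> Q" using R_Q q(1) R_Q[OF p] unfolding R_def by auto
  next
    fix a b assume "a \<in> R q" "b \<in> R q"
    then show "(a, b) \<in> E\<^sup>*" using returns unfolding R_def by (meson mem_Collect_eq rtrancl_trans)
  next
    fix a b assume "a \<in> R q" "(a, b) \<in> E"
    then show "b \<in> R q" unfolding R_def by auto
  qed
  then show ?thesis using q(1) unfolding R_def by auto
qed

lemma BSCC_reachable_short: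
  assumes "p \<in> Q"
  obtains S q m where "BSCC Q \<gamma> W S" "q \<in> S" "m < card Q" "((\<lambda>a b. (a, b) \<in> E) ^^ m) p q"
proof -
  obtain S q where S: "BSCC Q \<gamma> W S" "q \<in> S" "(p, q) \<in> E\<^sup>*" using BSCC_reachable[OF assms] by auto
  have "(\<lambda>a b. (a, b) \<in> E)\<^sup>*\<^sup>* p z \<Longrightarrow> z \<in> Q" for z
    using CA_rtrancl_in_Q assms by (simp add: rtranclp_rtrancl_eq)
  moreover have "(\<lambda>a b. (a, b) \<in> E)\<^sup>*\<^sup>* p q" using S(3) by (simp add: rtranclp_rtrancl_eq)
  ultimately show thesis
    using rtranclp_imp_relpowp_less_card[OF _ finite_Q] S(1,2) that by blast
qed

subsection \<open>Counters modulo \<open>h\<close>\<close>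

definition tr_mod :: "nat \<Rightarrow> 'q \<times> int \<Rightarrow> 'q \<times> int \<Rightarrow> bool" where
  "tr_mod h a b \<longleftrightarrow> (\<exists>\<kappa>. (fst a, \<kappa>, fst b) \<in> \<gamma> \<and> snd b = (snd a + \<kappa>) mod int h)"

lemma reach_imp_tr_mod:
  "reach c d \<Longrightarrow> (tr_mod h)\<^sup>*\<^sup>* (fst c, int (snd c) mod int h) (fst d, int (snd d) mod int h)"
proof (induction rule: rtranclp_induct)
  case (step y z)
  obtain p k p' k' where yz: "y = (p, k)" "z = (p', k')" by fastforce
  from step(2) have "(p', k') = (p, k) \<or> tr_mod h (p, int k mod int h) (p', int k' mod int h)"
    unfolding yz
  proof (cases rule: tr_cases)
    case (fire \<kappa>)
    then show ?thesis unfolding tr_mod_def by (auto simp: mod_add_left_eq)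
  qed simp
  then show ?case using step(3) yz by auto
qed simp

lemma tr_mod_lift:
  "(tr_mod h ^^ m) (p, int k mod int h) (p', i') \<Longrightarrow> m \<le> k \<Longrightarrow>
   \<exists>k'. (tr ^^ m) (p, k) (p', k') \<and> int k' mod int h = i' \<and> k \<le> k' + m"
proof (induction m arbitrary: p k)
  case (Suc m)
  obtain y where y: "tr_mod h (p, int k mod int h) y" "(tr_mod h ^^ m) y (p', i')"
    using relpowp_Suc_D2[OF Suc(2)] by auto
  obtain p1 \<kappa> where r: "(p, \<kappa>, p1) \<in> \<gamma>" "y = (p1, (int k mod int h + \<kappa>) mod int h)"
    using y(1) unfolding tr_mod_def by (metis prod.collapse fst_conv snd_conv)
  have \<kappa>: "\<kappa> \<in> {-1, 0, 1}" using rule_wf r(1) by blast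
  define k1 where "k1 = nat (int k + \<kappa>)"
  have k1: "int k1 = int k + \<kappa>" using \<kappa> Suc(3) unfolding k1_def by auto
  have first: "tr (p, k) (p1, k1)" using tr_by_rule[OF r(1), of k] Suc(3) unfolding k1_def by auto
  have "(tr_mod h ^^ m) (p1, int k1 mod int h) (p', i')" using y(2) r(2) k1 by (simp add: mod_add_left_eq)
  moreover have "m \<le> k1" using k1 \<kappa> Suc(3) by auto
  ultimately obtain k' where k': "(tr ^^ m) (p1, k1) (p', k')" "int k' mod int h = i'" "k1 \<le> k' + m"
    using Suc(1) by blast
  have "(tr ^^ Suc m) (p, k) (p', k')" using first k'(1) by (rule relpowp_Suc_I2)
  moreover have "k \<le> k' + Suc m" using k1 \<kappa> k'(3) by auto
  ultimately show ?case using k'(2) by blast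
qed simp

text \<open>Tracking the counter modulo \<open>h\<close> gives a finite abstraction with \<open>card Q * h\<close> states; a short
  abstract path can be executed as long as the counter is large.\<close>

lemma reach_congruent_short:
  assumes "reach (q, j1) (u, a1)" and "1 \<le> h" and "q \<in> Q"
    and "j2 mod h = j1 mod h" and "card Q * h \<le> j2"
  shows "\<exists>m < card Q * h. \<exists>x. (tr ^^ m) (q, j2) (u, x) \<and> x mod h = a1 mod h \<and> j2 \<le> x + m"
proof -
  have r: "(tr_mod h)\<^sup>*\<^sup>* (q, int j2 mod int h) (u, int a1 mod int h)"
    using reach_imp_tr_mod[OF assms(1), of h] assms(4) by (simp flip: zmod_int)
  have in_abstraction: "z \<in> Q \<times> {0..<int h}" if "(tr_mod h)\<^sup>*\<^sup>* (q, int j2 mod int h) z" for z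
    using that
  proof (induction rule: rtranclp_induct)
    case (step y z)
    then obtain \<kappa> where "(fst y, \<kappa>, fst z) \<in> \<gamma>" "snd z = (snd y + \<kappa>) mod int h"
      unfolding tr_mod_def by blast
    then show ?case using rule_wf assms(2) by (auto simp: mem_Times_iff)
  qed (use assms(2,3) in auto)
  have "finite (Q \<times> {0..<int h})" using finite_Q by simp
  from rtranclp_imp_relpowp_less_card[OF r this in_abstraction]
  obtain m where m: "m < card Q * h" "(tr_mod h ^^ m) (q, int j2 mod int h) (u, int a1 mod int h)"
    by (auto simp: card_cartesian_product)
  have "m \<le> j2" using m(1) assms(5) by linarith
  then obtain x where x: "(tr ^^ m) (q, j2) (u, x)" "int x mod int h = int a1 mod int h" "j2 \<le> x + m"
    using tr_mod_lift[OF m(2)] by blast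
  from x(2) have "x mod h = a1 mod h" by (simp flip: zmod_int)
  then show ?thesis using m(1) x(1,3) by blast
qed

subsection \<open>Recurrence and pumping\<close>

lemma recurrent_iff_post_star_subset: "recurrent c \<longleftrightarrow> post_star \<gamma> W {c} \<subseteq> pre_star \<gamma> W {c}"
  unfolding recurrent_def post_star_def pre_star_def by auto

lemma mem_region_I_iff:
  "c \<in> region_I \<gamma> W p \<longleftrightarrow> recurrent (p, 0) \<and> finite (post_star \<gamma> W {(p, 0)}) \<and> reach (p, 0) c"
  unfolding region_I_def recurrent_iff_post_star_subset by (auto simp: post_star_def)

lemma mem_region_II_iff:
  "c \<in> region_II \<gamma> W p \<longleftrightarrow> recurrent (p, 0) \<and> infinite (post_star \<gamma> W {(p, 0)}) \<and> reach (p, 0) c"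
  unfolding region_II_def recurrent_iff_post_star_subset by (auto simp: post_star_def)

lemma reach_pump: "reach (u, a) (u, a + h) \<Longrightarrow> reach (u, a) (u, a + r * h)"
proof (induction r)
  case (Suc r)
  have "reach (u, a + r * h) (u, a + h + r * h)" using reach_shift[OF Suc.prems, of "r * h"] by simp
  then show ?case using Suc by (auto simp: algebra_simps intro: rtranclp_trans)
qed simp

text \<open>Between counters \<open>0\<close> and \<open>card Q\<close> some control state appears at two levels; recurrence
  connects the two visits.\<close>

lemma recurrent_pump:
  assumes "recurrent z" and "fst z \<in> Q" and "snd z = 0" and "reach z y" and "card Q \<le> snd y"
  obtains u a h where "1 \<le> h" "a + h \<le> card Q" "reach z (u, a)" "reach (u, a) (u, a + h)"
proof -
  have "\<forall>l\<in>{0..card Q}. \<exists>x. reach z x \<and> reach x y \<and> snd x = l"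
    using reach_passes_level[OF assms(4)] assms(3,5) by auto
  then obtain X where X: "\<And>l. l \<in> {0..card Q} \<Longrightarrow> reach z (X l) \<and> reach (X l) y \<and> snd (X l) = l"
    by metis
  have "fst (X l) \<in> Q" if "l \<in> {0..card Q}" for l
    using reach_in_Q X[OF that] assms(2) by blast
  then have "(fst \<circ> X) ` {0..card Q} \<subseteq> Q" by auto
  then have "\<not> inj_on (fst \<circ> X) {0..card Q}"
    using card_inj_on_le[OF _ _ finite_Q] by fastforce
  then obtain l l' where l: "l < l'" "l' \<le> card Q" "fst (X l) = fst (X l')"
    unfolding inj_on_def by (metis atLeastAtMost_iff comp_apply linorder_neqE_nat)
  define u where "u = fst (X l)"
  have Xl: "X l = (u, l)" "X l' = (u, l')"
    using X l unfolding u_def by (metis atLeastAtMost_iff le0 less_imp_le order.trans prod.collapse)+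
  have "reach (X l) y" "reach z (X l')" using X l by auto
  moreover have "reach y z" using assms(1,4) unfolding recurrent_def by blast
  ultimately have "reach (u, l) (u, l + (l' - l))" using Xl l(1) by (auto intro: rtranclp_trans)
  moreover have "reach z (u, l)" using X[of l] Xl(1) l by auto
  ultimately show thesis using that[where u = u and a = l and h = "l' - l"] l by auto
qed

lemma pump_imp_infinite_post_star:
  assumes "reach z (u, a)" and "reach (u, a) (u, a + h)" and "1 \<le> h"
  shows "infinite (post_star \<gamma> W {z})"
proof
  assume fin: "finite (post_star \<gamma> W {z})"
  have "range (\<lambda>r. (u, a + r * h)) \<subseteq> post_star \<gamma> W {z}"
    using reach_pump[OF assms(2)] assms(1) unfolding post_star_def by (auto intro: rtranclp_trans)
  moreover have "inj (\<lambda>r. (u, a + r * h))" using assms(3) unfolding inj_def by auto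
  ultimately show False using fin by (meson finite_imageD finite_subset infinite_UNIV_nat)
qed

lemma recurrent_finite_counter_bound:
  assumes "recurrent z" and "fst z \<in> Q" and "snd z = 0" and "finite (post_star \<gamma> W {z})"
    and "reach z y"
  shows "snd y < card Q"
proof (rule ccontr)
  assume "\<not> snd y < card Q"
  with assms obtain u a h where "1 \<le> h" "reach z (u, a)" "reach (u, a) (u, a + h)"
    by (elim recurrent_pump) auto
  then show False using pump_imp_infinite_post_star assms(4) by blast
qed

lemma infinite_post_star_high:
  assumes "infinite (post_star \<gamma> W {z})" and "fst z \<in> Q"
  obtains y where "reach z y" "card Q \<le> snd y"
proof (rule ccontr)
  assume "\<not> thesis"
  then have "post_star \<gamma> W {z} \<subseteq> Q \<times> {0..<card Q}"
    using that reach_in_Q assms(2) unfolding post_star_def by (fastforce simp: mem_Times_iff)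
  then show False using assms(1) finite_Q by (meson finite_SigmaI finite_atLeastLessThan finite_subset)
qed

lemma region_I_counter_bound: "c \<in> region_I \<gamma> W p \<Longrightarrow> p \<in> Q \<Longrightarrow> snd c < card Q"
  unfolding mem_region_I_iff using recurrent_finite_counter_bound[of "(p, 0)"] by auto

lemma recurrent_infinite_post_star_in_BSCC:
  assumes "recurrent (p, 0)" and "infinite (post_star \<gamma> W {(p, 0)})" and "p \<in> Q"
  obtains S where "BSCC Q \<gamma> W S" "p \<in> S"
proof -
  obtain y where y: "reach (p, 0) y" "card Q \<le> snd y"
    using assms(2,3) by (elim infinite_post_star_high) auto
  have "fst y \<in> Q" using reach_in_Q[OF y(1)] assms(3) by simp
  then obtain S q m where S: "BSCC Q \<gamma> W S" "q \<in> S" "m < card Q"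
    "((\<lambda>a b. (a, b) \<in> E) ^^ m) (fst y) q"
    by (rule BSCC_reachable_short)
  obtain k where "(tr ^^ m) (fst y, snd y) (q, k)"
    using CA_relpowp_lift[OF S(4), of "snd y"] S(3) y(2) by auto
  then have "reach y (q, k)" by (simp add: relpowp_imp_rtranclp)
  moreover have "reach (q, k) (p, 0)"
    using assms(1) y(1) \<open>reach y (q, k)\<close> rtranclp_trans unfolding recurrent_def by metis
  ultimately have "p \<in> S" using reach_in_BSCC[OF S(1), of "(q, k)" "(p, 0)"] S(2) by simp
  then show thesis using that S(1) by blast
qed

text \<open>Among the zero-counter configurations reachable from \<open>c\<close>, one that reaches the fewest others.\<close>

lemma reaches_zero_minimal:
  assumes "reaches_zero c" and "fst c \<in> Q"
  obtains p where "reach c (p, 0)" "\<And>q. reach (p, 0) (q, 0) \<Longrightarrow> reach (q, 0) (p, 0)"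
proof -
  define Z where "Z x = {q. reach x (q, 0)}" for x
  have finite_Z: "finite (Z x)" if "fst x \<in> Q" for x
  proof -
    have "Z x \<subseteq> Q" using reach_in_Q that unfolding Z_def by fastforce
    then show ?thesis using finite_Q by (simp add: finite_subset)
  qed
  obtain q0 where "q0 \<in> Z c" using assms(1) unfolding reaches_zero_def Z_def by auto
  then obtain p where p: "p \<in> Z c" "\<And>q. q \<in> Z c \<Longrightarrow> card (Z (p, 0)) \<le> card (Z (q, 0))"
    using ex_has_least_nat[of "\<lambda>q. q \<in> Z c" q0 "\<lambda>q. card (Z (q, 0))"] by auto
  have "p \<in> Q" using p(1) reach_in_Q[of c "(p, 0)"] assms(2) unfolding Z_def by auto
  have "reach (q, 0) (p, 0)" if "reach (p, 0) (q, 0)" for q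
  proof -
    have "Z (q, 0) \<subseteq> Z (p, 0)" "q \<in> Z c" using that p(1) unfolding Z_def by (auto intro: rtranclp_trans)
    then have "Z (q, 0) = Z (p, 0)" using p(2) finite_Z[of "(p, 0)"] \<open>p \<in> Q\<close> by (intro card_seteq) auto
    moreover have "p \<in> Z (p, 0)" unfolding Z_def by auto
    ultimately show ?thesis unfolding Z_def by auto
  qed
  then show thesis using that p(1) unfolding Z_def by blast
qed

subsection \<open>Regions\<close>

lemma in_region_I: "p \<in> Q \<Longrightarrow> c \<in> region_I \<gamma> W p \<Longrightarrow> in_region c"
  unfolding in_region_def is_region_def by (rule exI[of _ "region_I \<gamma> W p"]) auto

lemma in_region_II: "BSCC Q \<gamma> W S \<Longrightarrow> p \<in> S \<Longrightarrow> c \<in> region_II \<gamma> W p \<Longrightarrow> in_region c"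
  unfolding in_region_def is_region_def by (rule exI[of _ "region_II \<gamma> W p"]) auto

lemma in_region_III: "BSCC Q \<gamma> W S \<Longrightarrow> c \<in> region_III \<gamma> W S \<Longrightarrow> in_region c"
  unfolding in_region_def is_region_def by (rule exI[of _ "region_III \<gamma> W S"]) auto

lemma in_region_IV: "BSCC Q \<gamma> W S \<Longrightarrow> c \<in> region_IV \<gamma> W S \<Longrightarrow> in_region c"
  unfolding in_region_def is_region_def by (rule exI[of _ "region_IV \<gamma> W S"]) auto

lemma not_reaches_zero_reaches_region:
  assumes "\<not> reaches_zero c" and "fst c \<in> Q"
  shows "\<exists>c'. reach c c' \<and> in_region c'"
proof -
  obtain S q where S: "BSCC Q \<gamma> W S" "q \<in> S" "(fst c, q) \<in> E\<^sup>*"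
    using BSCC_reachable[OF assms(2)] by blast
  then obtain k where k: "reach c (q, k)"
    using CA_rtrancl_imp_reach[OF S(3), of "snd c"] assms(1) by auto
  then have "\<not> reaches_zero (q, k)" using reaches_zero_reach assms(1) by blast
  then have "(q, k) \<in> region_III \<gamma> W S"
    using S(2) reaches_zero_zero unfolding region_III_def reaches_zero_def by (cases k) auto
  then show ?thesis using in_region_III[OF S(1)] k by blast
qed

lemma reaches_region:
  assumes "fst c \<in> Q"
  shows "\<exists>c'. reach c c' \<and> in_region c'"
proof (cases "reaches_zero c")
  case False
  then show ?thesis using not_reaches_zero_reaches_region assms by blast
next
  case True
  then obtain p where p: "reach c (p, 0)" "\<And>q. reach (p, 0) (q, 0) \<Longrightarrow> reach (q, 0) (p, 0)"
    using reaches_zero_minimal assms by blast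
  have "p \<in> Q" using reach_in_Q[OF p(1) assms] by simp
  show ?thesis
  proof (cases "recurrent (p, 0)")
    case rec: True
    show ?thesis
    proof (cases "finite (post_star \<gamma> W {(p, 0)})")
      case True
      then have "(p, 0) \<in> region_I \<gamma> W p" using rec by (simp add: mem_region_I_iff)
      then show ?thesis using in_region_I \<open>p \<in> Q\<close> p(1) by blast
    next
      case False
      then obtain S where "BSCC Q \<gamma> W S" "p \<in> S"
        using rec \<open>p \<in> Q\<close> by (elim recurrent_infinite_post_star_in_BSCC)
      moreover have "(p, 0) \<in> region_II \<gamma> W p" using rec False by (simp add: mem_region_II_iff)
      ultimately show ?thesis using in_region_II p(1) by blast
    qed
  next
    case False
    then obtain d where d: "reach (p, 0) d" "\<not> reach d (p, 0)" unfolding recurrent_def by blast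
    have "\<not> reaches_zero d"
      using p(2) d rtranclp_trans unfolding reaches_zero_def by metis
    moreover have "fst d \<in> Q" using reach_in_Q[OF d(1)] \<open>p \<in> Q\<close> by simp
    ultimately obtain c' where "reach d c'" "in_region c'"
      using not_reaches_zero_reaches_region by blast
    then show ?thesis using p(1) d(1) rtranclp_trans by metis
  qed
qed

subsection \<open>Configurations with a high counter\<close>

lemma BSCC_all_reach_zero:
  assumes "BSCC Q \<gamma> W S" and "q \<in> S" and "card Q \<le> j" and "reaches_zero (q, j)" and "fst c \<in> S"
  shows "reaches_zero c"
proof -
  have SQ: "S \<subseteq> Q" using assms(1) unfolding BSCC_def by auto
  obtain u a where u: "reach (q, j) (u, a)" "\<And>x. reaches_zero (u, x)"
    using high_reaches_zero_imp_negative_cycle assms(2-4) SQ by blast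
  have "u \<in> S" using reach_in_BSCC[OF assms(1) u(1)] assms(2) by simp
  then have "(fst c, u) \<in> E\<^sup>*" using assms(1,5) unfolding BSCC_def by auto
  then have "reaches_zero (fst c, snd c) \<or> (\<exists>k. reach (fst c, snd c) (u, k))"
    by (rule CA_rtrancl_imp_reach)
  then show ?thesis using u(2) reaches_zero_reach by (metis prod.collapse)
qed

text \<open>A type II region contains a pump of length \<open>h \<le> card Q\<close>, and \<open>h\<close> divides \<open>(card Q)!\<close>;
  so whether it is reachable depends only on the counter modulo \<open>(card Q)!\<close>, and then it is
  reachable in fewer than \<open>card Q * card Q\<close> steps.\<close>

lemma reach_R_II_congruent:
  assumes S: "BSCC Q \<gamma> W S" and pre: "(q, j1) \<in> pre_star \<gamma> W (R_II \<gamma> W S)" and q: "q \<in> Q"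
    and cong: "j2 mod fact (card Q) = j1 mod fact (card Q)" and j2: "card Q * card Q + card Q \<le> j2"
  shows "\<exists>m < card Q * card Q. \<exists>c'. (tr ^^ m) (q, j2) c' \<and> c' \<in> R_II \<gamma> W S"
proof -
  obtain s y where s: "s \<in> S" "y \<in> region_II \<gamma> W s" "reach (q, j1) y"
    using pre unfolding pre_star_def R_II_def by auto
  have "s \<in> Q" using S s(1) unfolding BSCC_def by auto
  have rec: "recurrent (s, 0)" and inf: "infinite (post_star \<gamma> W {(s, 0)})" and "reach (s, 0) y"
    using s(2) by (auto simp: mem_region_II_iff)
  obtain y' where "reach (s, 0) y'" "card Q \<le> snd y'"
    using inf \<open>s \<in> Q\<close> by (elim infinite_post_star_high) auto
  then obtain u a h where pump: "1 \<le> h" "a + h \<le> card Q" "reach (s, 0) (u, a)" "reach (u, a) (u, a + h)"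
    using rec \<open>s \<in> Q\<close> by (elim recurrent_pump) auto
  have "reach y (s, 0)" using rec \<open>reach (s, 0) y\<close> unfolding recurrent_def by blast
  then have "reach (q, j1) (u, a)" using s(3) pump(3) by (simp add: rtranclp_trans)
  moreover have "j2 mod h = j1 mod h"
  proof -
    have "h dvd fact (card Q)" using pump(1,2) by (simp add: dvd_fact)
    then have "j2 mod h = j2 mod fact (card Q) mod h" by (simp add: mod_mod_cancel)
    also have "\<dots> = j1 mod h" using cong \<open>h dvd fact (card Q)\<close> by (simp add: mod_mod_cancel)
    finally show ?thesis .
  qed
  moreover have hQ: "card Q * h \<le> card Q * card Q" using pump(2) by simp
  then have "card Q * h \<le> j2" using j2 by linarith
  ultimately obtain m x where mx: "m < card Q * h" "(tr ^^ m) (q, j2) (u, x)"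
    "x mod h = a mod h" "j2 \<le> x + m"
    using reach_congruent_short[OF _ pump(1) q] by blast
  have m: "m < card Q * card Q" using mx(1) hQ by linarith
  then have "a \<le> x" using mx(4) j2 pump(2) by linarith
  then have "h dvd x - a" using mx(3) by (simp add: mod_eq_dvd_iff_nat)
  then obtain r where "x - a = r * h" by (metis dvdE mult.commute)
  then have "x = a + r * h" using \<open>a \<le> x\<close> by simp
  then have "reach (s, 0) (u, x)" using reach_pump[OF pump(4), of r] pump(3) by (simp add: rtranclp_trans)
  then have "(u, x) \<in> R_II \<gamma> W S" using rec inf s(1) unfolding R_II_def by (auto simp: mem_region_II_iff)
  then show ?thesis using mx(2) m by blast
qed

lemma pre_star_R_II_mod_fact:
  assumes S: "BSCC Q \<gamma> W S" and q: "q \<in> Q" and j: "card Q * card Q + card Q \<le> j"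
    and "(q, j + t * fact (card Q)) \<in> pre_star \<gamma> W (R_II \<gamma> W S)"
  shows "(q, j) \<in> pre_star \<gamma> W (R_II \<gamma> W S)"
proof -
  have "j mod fact (card Q) = (j + t * fact (card Q)) mod fact (card Q)" by simp
  then obtain m c' where "(tr ^^ m) (q, j) c'" "c' \<in> R_II \<gamma> W S"
    using reach_R_II_congruent[OF S assms(4) q _ j] by blast
  then show ?thesis using relpowp_imp_rtranclp unfolding pre_star_def by fastforce
qed

lemma BSCC_zero_recurrent:
  assumes S: "BSCC Q \<gamma> W S" and zero: "\<And>c. fst c \<in> S \<Longrightarrow> reaches_zero c" and "fst c \<in> S"
  obtains p where "reach c (p, 0)" "p \<in> S" "recurrent (p, 0)"
proof -
  have "fst c \<in> Q" using assms(3) S unfolding BSCC_def by auto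
  then obtain p where p: "reach c (p, 0)" "\<And>q. reach (p, 0) (q, 0) \<Longrightarrow> reach (q, 0) (p, 0)"
    using reaches_zero_minimal zero assms(3) by blast
  have "p \<in> S" using reach_in_BSCC[OF S p(1)] assms(3) by simp
  have "recurrent (p, 0)" unfolding recurrent_def
  proof (intro allI impI)
    fix d assume d: "reach (p, 0) d"
    have "fst d \<in> S" using reach_in_BSCC[OF S d] \<open>p \<in> S\<close> by simp
    then obtain q where "reach d (q, 0)" using zero unfolding reaches_zero_def by blast
    moreover from this have "reach (q, 0) (p, 0)" using p(2) d rtranclp_trans by metis
    ultimately show "reach d (p, 0)" by (rule rtranclp_trans)
  qed
  then show thesis using that p(1) \<open>p \<in> S\<close> by blast
qed

lemma BSCC_region_IV:
  assumes S: "BSCC Q \<gamma> W S" and q: "q \<in> S" and j: "card Q * card Q + card Q \<le> j"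
    and zero: "\<And>c. fst c \<in> S \<Longrightarrow> reaches_zero c"
    and "(q, j) \<notin> pre_star \<gamma> W (R_II \<gamma> W S)"
  shows "(q, j) \<in> region_IV \<gamma> W S"
proof -
  have SQ: "S \<subseteq> Q" using S unfolding BSCC_def by auto
  have not_II: "(q, j + t * fact (card Q)) \<notin> pre_star \<gamma> W (R_II \<gamma> W S)" for t
    using pre_star_R_II_mod_fact[OF S _ j] assms(5) q SQ by blast
  define C where "C t = (q, j + t * fact (card Q))" for t
  have "C t \<in> D_set \<gamma> W S" for t
  proof -
    have "fst (C t) \<in> S" using q unfolding C_def by simp
    then obtain p where p: "reach (C t) (p, 0)" "p \<in> S" "recurrent (p, 0)"
      using BSCC_zero_recurrent[OF S zero] by blast
    have "finite (post_star \<gamma> W {(p, 0)})"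
    proof (rule ccontr)
      assume "infinite (post_star \<gamma> W {(p, 0)})"
      then have "(p, 0) \<in> R_II \<gamma> W S" using p(2,3) unfolding R_II_def by (auto simp: mem_region_II_iff)
      then show False using not_II[of t] p(1) unfolding C_def pre_star_def by auto
    qed
    then have "(p, 0) \<in> R_I \<gamma> W S" using p(2,3) unfolding R_I_def by (auto simp: mem_region_I_iff)
    then have "C t \<in> pre_star \<gamma> W (R_I \<gamma> W S)" using p(1) unfolding pre_star_def by auto
    moreover have "C t \<notin> R_I \<gamma> W S"
      using region_I_counter_bound SQ j unfolding R_I_def C_def by fastforce
    ultimately show ?thesis using not_II[of t] q unfolding D_set_def C_def by auto
  qed
  moreover have "inj C" unfolding C_def inj_def by auto
  ultimately have "infinite (D_set \<gamma> W S)"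
    by (meson finite_imageD finite_subset image_subsetI infinite_UNIV_nat)
  moreover have "(q, j) \<in> D_set \<gamma> W S" using \<open>C 0 \<in> D_set \<gamma> W S\<close> unfolding C_def by simp
  ultimately show ?thesis unfolding region_IV_def by simp
qed

lemma BSCC_high_reaches_region:
  assumes S: "BSCC Q \<gamma> W S" and q: "q \<in> S" and j: "card Q * card Q + card Q \<le> j"
  shows "\<exists>m < card Q * card Q. \<exists>c'. (tr ^^ m) (q, j) c' \<and> in_region c'"
proof -
  have "q \<in> Q" using S q unfolding BSCC_def by auto
  then have "0 < card Q * card Q" using finite_Q card_gt_0_iff by auto
  have "card Q \<le> j" using j by simp
  show ?thesis
  proof (cases "reaches_zero (q, j)")
    case False
    then have "(q, j) \<in> region_III \<gamma> W S"
      using q reaches_zero_zero unfolding region_III_def reaches_zero_def by (cases j) auto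
    then show ?thesis using in_region_III[OF S] \<open>0 < card Q * card Q\<close> by (intro exI[of _ 0]) auto
  next
    case True
    then have zero: "\<And>c. fst c \<in> S \<Longrightarrow> reaches_zero c"
      using BSCC_all_reach_zero[OF S q \<open>card Q \<le> j\<close>] by blast
    show ?thesis
    proof (cases "(q, j) \<in> pre_star \<gamma> W (R_II \<gamma> W S)")
      case True
      then obtain m c' where "m < card Q * card Q" "(tr ^^ m) (q, j) c'" "c' \<in> R_II \<gamma> W S"
        using reach_R_II_congruent[OF S _ \<open>q \<in> Q\<close> _ j] by blast
      moreover from this(3) obtain s where "s \<in> S" "c' \<in> region_II \<gamma> W s" unfolding R_II_def by auto
      ultimately show ?thesis using in_region_II[OF S] by blast
    next
      case False
      then have "(q, j) \<in> region_IV \<gamma> W S" using BSCC_region_IV[OF S q j zero] by blast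
      then show ?thesis using in_region_IV[OF S] \<open>0 < card Q * card Q\<close> by (intro exI[of _ 0]) auto
    qed
  qed
qed

lemma high_reaches_region:
  assumes "p \<in> Q" and "card Q * card Q + 2 * card Q \<le> k"
  shows "\<exists>m < card Q * card Q + card Q. \<exists>c'. (tr ^^ m) (p, k) c' \<and> in_region c'"
proof -
  obtain S q m1 where S: "BSCC Q \<gamma> W S" "q \<in> S" "m1 < card Q" "((\<lambda>a b. (a, b) \<in> E) ^^ m1) p q"
    using BSCC_reachable_short[OF assms(1)] by blast
  obtain k' where k': "(tr ^^ m1) (p, k) (q, k')" "k \<le> k' + m1"
    using CA_relpowp_lift[OF S(4), of k] S(3) assms(2) by fastforce
  have "card Q * card Q + card Q \<le> k'" using k'(2) S(3) assms(2) by linarith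
  then obtain m2 c' where m2: "m2 < card Q * card Q" "(tr ^^ m2) (q, k') c'" "in_region c'"
    using BSCC_high_reaches_region[OF S(1,2)] by blast
  have "(tr ^^ (m1 + m2)) (p, k) c'" using k'(1) m2(2) by (rule relpowp_trans)
  moreover have "m1 + m2 < card Q * card Q + card Q" using S(3) m2(1) by linarith
  ultimately show ?thesis using m2(3) by blast
qed

subsection \<open>Configurations with a low counter\<close>

definition tr_below :: "nat \<Rightarrow> 'q conf \<Rightarrow> 'q conf \<Rightarrow> bool" where
  "tr_below H c c' \<longleftrightarrow> tr c c' \<and> snd c < H"

lemma reach_below_or_exit:
  "reach c y \<Longrightarrow> \<exists>w. (tr_below H)\<^sup>*\<^sup>* c w \<and> (w = y \<or> H \<le> snd w)"
proof (induction rule: converse_rtranclp_induct)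
  case (step a b)
  show ?case
  proof (cases "H \<le> snd a")
    case False
    then have "tr_below H a b" using step(1) by (simp add: tr_below_def)
    then show ?thesis using step(3) converse_rtranclp_into_rtranclp[of "tr_below H" a b] by blast
  qed blast
qed blast

lemma reaches_region_or_level:
  assumes "p \<in> Q" and "k \<le> H"
  shows "\<exists>m < card Q * (H + 1). \<exists>w. (tr ^^ m) (p, k) w \<and> (in_region w \<or> H \<le> snd w)"
proof -
  have "\<exists>y. reach (p, k) y \<and> in_region y" using reaches_region[of "(p, k)"] assms(1) by simp
  then obtain y where y: "reach (p, k) y" "in_region y" by blast
  obtain w where w: "(tr_below H)\<^sup>*\<^sup>* (p, k) w" "w = y \<or> H \<le> snd w"
    using reach_below_or_exit[OF y(1)] by blast
  have "z \<in> Q \<times> {0..H}" if "(tr_below H)\<^sup>*\<^sup>* (p, k) z" for z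
    using that
  proof (induction rule: rtranclp_induct)
    case (step a b)
    then have "tr (fst a, snd a) (fst b, snd b)" "snd a < H" "fst a \<in> Q"
      unfolding tr_below_def by auto
    then show ?case using tr_counter_diff[of "fst a" "snd a" "fst b" "snd b"]
        tr_in_Q[of "fst a" "snd a" "fst b" "snd b"] by (auto simp: mem_Times_iff)
  qed (use assms in auto)
  moreover have "finite (Q \<times> {0..H})" using finite_Q by simp
  ultimately obtain m where m: "m < card (Q \<times> {0..H})" "((tr_below H) ^^ m) (p, k) w"
    using rtranclp_imp_relpowp_less_card[OF w(1)] by blast
  then have "(tr ^^ m) (p, k) w"
    using relpowp_mono[of "tr_below H" tr, OF _ m(2)] unfolding tr_below_def by blast
  moreover have "in_region w \<or> H \<le> snd w" using w(2) y(2) by blast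
  moreover have "m < card Q * (H + 1)" using m(1) by (simp add: card_cartesian_product)
  ultimately show ?thesis by blast
qed

lemma reaches_region_within_bound:
  assumes "p \<in> Q"
  shows "\<exists>m \<le> 11 * card Q ^ 4. \<exists>c'. (tr ^^ m) (p, k) c' \<and> in_region c'"
proof -
  define H where "H = card Q * card Q + 2 * card Q"
  have "1 \<le> card Q" using assms finite_Q by (auto simp: Suc_le_eq card_gt_0_iff)
  then have bound: "card Q * (H + 1) + (card Q * card Q + card Q) \<le> 11 * card Q ^ 4"
    unfolding H_def by (rule region_bound_arith)
  show ?thesis
  proof (cases "H \<le> k")
    case True
    then obtain m c' where "m < card Q * card Q + card Q" "(tr ^^ m) (p, k) c'" "in_region c'"
      using high_reaches_region[OF assms] unfolding H_def by blast
    moreover from this(1) have "m \<le> 11 * card Q ^ 4" using bound by linarith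
    ultimately show ?thesis by blast
  next
    case False
    then obtain m w where m: "m < card Q * (H + 1)" "(tr ^^ m) (p, k) w" "in_region w \<or> H \<le> snd w"
      using reaches_region_or_level[OF assms, of k H] by auto
    show ?thesis
    proof (cases "in_region w")
      case True
      moreover have "m \<le> 11 * card Q ^ 4" using m(1) bound by linarith
      ultimately show ?thesis using m(2) by blast
    next
      case False
      have "fst w \<in> Q" using reach_in_Q[OF relpowp_imp_rtranclp[OF m(2)]] assms by simp
      then obtain m' c' where m': "m' < card Q * card Q + card Q" "(tr ^^ m') (fst w, snd w) c'" "in_region c'"
        using high_reaches_region[of "fst w" "snd w"] m(3) False unfolding H_def by blast
      have "(tr ^^ (m + m')) (p, k) c'" using relpowp_trans[OF m(2)] m'(2) by simp
      moreover have "m + m' \<le> 11 * card Q ^ 4" using m(1) m'(1) bound by linarith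
      ultimately show ?thesis using m'(3) by blast
    qed
  qed
qed

end

theorem lemma1:
  fixes Q :: "'q set" and \<gamma> :: "'q rule set" and W :: "'q rule \<Rightarrow> nat"
  assumes "pVASS1 Q \<gamma> W"
  shows "\<forall>p\<in>Q. \<forall>k::nat. \<exists>m \<le> 11 * card Q ^ 4. \<exists>c'.
           ((MA_step \<gamma> W) ^^ m) (p, k) c' \<and> (\<exists>R. is_region Q \<gamma> W R \<and> c' \<in> R)"
proof -
  interpret pVASS1_system Q \<gamma> W using assms by unfold_locales
  show ?thesis using reaches_region_within_bound unfolding in_region_def by blast
qed

end
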